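(* Let $F : L_n \to \Delta K$ be a non-degenerate $2$-filtration, fix a dimension $q$, and fix grades $d,h\in L_n$ with $(1,1)\le d$ and $d\le h-(1,1)$. Set $a=d-(1,1)$ and $e=h-(1,1)$. If $adeh=0$, then $\mathsf{Dgm}_q F[d,h]=0$.
   Context: $K$ is a finite simplicial complex, coefficients in a field. $P_n=\{0<\dots<n\}$, $L_n=P_n\times P_n$ with product order, $\bot=(0,0)$, $\top=(n,n)$. $\mathsf{Int}\,L_n=\{[x,y]:x\le y\}$ with $[x,y]\le[z,w]$ iff $x\le z$, $y\le w$. A $2$-filtration is a monotone map $F$ from $L_n$ to subcomplexes of $K$ with $F(\bot)=\emptyset$, $F(\top)=K$. $ZB_qF[x,y]=\dim(Z_qF(x)\cap B_qF(y))$ for $y\ne\top$ and $\dim Z_qF(x)$ for $y=\top$ ($Z_q$, $B_q$ = $q$-cycles, $q$-boundaries). $\mathsf{Dgm}_qF$ is the unique function on $\mathsf{Int}\,L_n$ with $ZB_qF[z,w]=\sum_{[x,y]\le[z,w]}\mathsf{Dgm}_qF[x,y]$. Lower corners of a simplex $\sigma$ are the minimal elements of $\{x:\sigma\in F(x)\}$; $F$ is non-degenerate if any two distinct lower corners differ in both coordinates. Notation: $xy:=ZB_qF[x,y]$ for $x\le y$; $wxyz:=xz-xy-wz+wy$ for $w\le x\le y\le z$. *)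

theory Defs
  imports Main HOL.Vector_Spaces "HOL-Library.Function_Algebras" "HOL-Library.Product_Order"
begin

type_synonym grade = "nat \<times> nat"

text \<open>The grid L_n = P_n x P_n; the order on pairs is the product order (Product_Order).\<close>
definition grid :: "nat \<Rightarrow> grade set" where
  "grid n = {0..n} \<times> {0..n}"

definition simplicial_complex :: "'v set set \<Rightarrow> bool" where
  "simplicial_complex K \<longleftrightarrow> finite K \<and>
     (\<forall>\<sigma>\<in>K. finite \<sigma> \<and> \<sigma> \<noteq> {} \<and> (\<forall>\<tau>. \<tau> \<subseteq> \<sigma> \<and> \<tau> \<noteq> {} \<longrightarrow> \<tau> \<in> K))"

definition subcomplex :: "'v set set \<Rightarrow> 'v set set \<Rightarrow> bool" where
  "subcomplex S K \<longleftrightarrow> S \<subseteq> K \<and> (\<forall>\<sigma>\<in>S. \<forall>\<tau>. \<tau> \<subseteq> \<sigma> \<and> \<tau> \<noteq> {} \<longrightarrow> \<tau> \<in> S)"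

definition two_filtration :: "nat \<Rightarrow> 'v set set \<Rightarrow> (grade \<Rightarrow> 'v set set) \<Rightarrow> bool" where
  "two_filtration n K F \<longleftrightarrow>
     (\<forall>x\<in>grid n. subcomplex (F x) K) \<and>
     (\<forall>x\<in>grid n. \<forall>y\<in>grid n. x \<le> y \<longrightarrow> F x \<subseteq> F y) \<and>
     F (0, 0) = {} \<and> F (n, n) = K"

definition lower_corners :: "nat \<Rightarrow> (grade \<Rightarrow> 'v set set) \<Rightarrow> 'v set \<Rightarrow> grade set" where
  "lower_corners n F \<sigma> =
     {x \<in> grid n. \<sigma> \<in> F x \<and> (\<forall>y\<in>grid n. \<sigma> \<in> F y \<and> y \<le> x \<longrightarrow> y = x)}"

definition non_degenerate :: "nat \<Rightarrow> 'v set set \<Rightarrow> (grade \<Rightarrow> 'v set set) \<Rightarrow> bool" where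
  "non_degenerate n K F \<longleftrightarrow>
     (\<forall>\<sigma>\<in>K. \<forall>x\<in>lower_corners n F \<sigma>. \<forall>y\<in>lower_corners n F \<sigma>.
        x \<noteq> y \<longrightarrow> fst x \<noteq> fst y \<and> snd x \<noteq> snd y)"

definition chains :: "nat \<Rightarrow> 'v set set \<Rightarrow> ('v set \<Rightarrow> 'k::field) set" where
  "chains q S = {c. \<forall>\<sigma>. c \<sigma> \<noteq> 0 \<longrightarrow> \<sigma> \<in> S \<and> card \<sigma> = Suc q}"

text \<open>Simplicial boundary (non-augmented), orientation induced by the linear order on vertices.\<close>
definition boundary :: "('v::linorder) set set \<Rightarrow> ('v set \<Rightarrow> 'k::field) \<Rightarrow> ('v set \<Rightarrow> 'k)" where
  "boundary K c \<tau> = (if \<tau> = {} then 0 else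
     (\<Sum>\<sigma>\<in>K. \<Sum>v\<in>\<sigma>. if \<sigma> - {v} = \<tau> then (-1) ^ card {u\<in>\<sigma>. u < v} * c \<sigma> else 0))"

definition cycles :: "('v::linorder) set set \<Rightarrow> nat \<Rightarrow> 'v set set \<Rightarrow> ('v set \<Rightarrow> 'k::field) set" where
  "cycles K q S = {c \<in> chains q S. boundary K c = 0}"

definition boundaries :: "('v::linorder) set set \<Rightarrow> nat \<Rightarrow> 'v set set \<Rightarrow> ('v set \<Rightarrow> 'k::field) set" where
  "boundaries K q S = boundary K ` chains (Suc q) S"

definition fdim :: "'k::field itself \<Rightarrow> ('a \<Rightarrow> 'k) set \<Rightarrow> nat" where
  "fdim _ W = vector_space.dim (\<lambda>(a::'k) f x. a * f x) W"

definition ZB :: "'k::field itself \<Rightarrow> ('v::linorder) set set \<Rightarrow> (grade \<Rightarrow> 'v set set) \<Rightarrow> nat \<Rightarrow> nat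
    \<Rightarrow> grade \<Rightarrow> grade \<Rightarrow> nat" where
  "ZB k K F n q x y =
     (if y = (n, n) then fdim k (cycles K q (F x) :: ('v set \<Rightarrow> 'k) set)
      else fdim k (cycles K q (F x) \<inter> boundaries K q (F y) :: ('v set \<Rightarrow> 'k) set))"

definition intervals :: "nat \<Rightarrow> (grade \<times> grade) set" where
  "intervals n = {(x, y). x \<in> grid n \<and> y \<in> grid n \<and> x \<le> y}"

definition Dgm :: "'k::field itself \<Rightarrow> ('v::linorder) set set \<Rightarrow> (grade \<Rightarrow> 'v set set) \<Rightarrow> nat \<Rightarrow> nat
    \<Rightarrow> grade \<Rightarrow> grade \<Rightarrow> int" where
  "Dgm k K F n q = (THE D. (\<forall>x y. (x, y) \<notin> intervals n \<longrightarrow> D x y = 0) \<and>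
     (\<forall>(z, w)\<in>intervals n. int (ZB k K F n q z w) =
        (\<Sum>(x, y)\<in>{(x, y)\<in>intervals n. x \<le> z \<and> y \<le> w}. D x y)))"

text \<open>wxyz := xz - xy - wz + wy, where xy := ZB[x,y].\<close>
definition quad :: "'k::field itself \<Rightarrow> ('v::linorder) set set \<Rightarrow> (grade \<Rightarrow> 'v set set) \<Rightarrow> nat \<Rightarrow> nat
    \<Rightarrow> grade \<Rightarrow> grade \<Rightarrow> grade \<Rightarrow> grade \<Rightarrow> int" where
  "quad k K F n q w x y z = int (ZB k K F n q x z) - int (ZB k K F n q x y)
      - int (ZB k K F n q w z) + int (ZB k K F n q w y)"

end

theory Submission
  imports Defs
begin

text \<open>Write f x y for ZB[x, y]. Cycles grow with x and boundaries with y, so the Grassmann inequality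
  dim U + dim V \<le> dim (U + V) + dim (U \<inter> V), applied to U = Z(x') \<inter> B(y) and V = Z(x) \<inter> B(y'),
  shows that f has increasing differences: every quadrangle difference wxyz with w \<le> x and y \<le> z
  is nonnegative. Quadrangle differences are additive under subdividing either interval, so
  adeh = 0 forces all quadrangle differences inside [a, d] \<times> [e, h] to vanish. Finally, Moebius
  inversion on Int L_n expresses Dgm[d, h] as the mixed second difference of f over the corners of the
  unit squares below d and h, which is a signed sum of four such quadrangle differences.\<close>

section \<open>Functions with increasing differences\<close>

definition quad_diff :: "('a \<Rightarrow> 'b \<Rightarrow> 'c::ab_group_add) \<Rightarrow> 'a \<Rightarrow> 'a \<Rightarrow> 'b \<Rightarrow> 'b \<Rightarrow> 'c" where
  "quad_diff f w x y z = f x z - f x y - f w z + f w y"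

lemma quad_eq_quad_diff: "quad k K F n q = quad_diff (\<lambda>x y. int (ZB k K F n q x y))"
  by (simp add: fun_eq_iff quad_def quad_diff_def)

definition increasing_differences_on ::
    "'a::order set \<Rightarrow> 'b::order set \<Rightarrow> ('a \<Rightarrow> 'b \<Rightarrow> 'c::ordered_ab_group_add) \<Rightarrow> bool" where
  "increasing_differences_on A B f \<longleftrightarrow>
     (\<forall>w\<in>A. \<forall>x\<in>A. \<forall>y\<in>B. \<forall>z\<in>B. w \<le> x \<longrightarrow> y \<le> z \<longrightarrow> 0 \<le> quad_diff f w x y z)"

lemma quad_diff_mono:
  assumes f: "increasing_differences_on A B f"
    and A: "w \<in> A" "w' \<in> A" "x' \<in> A" "x \<in> A" and "w \<le> w'" "w' \<le> x'" "x' \<le> x"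
    and B: "y \<in> B" "y' \<in> B" "z' \<in> B" "z \<in> B" and "y \<le> y'" "y' \<le> z'" "z' \<le> z"
  shows "quad_diff f w' x' y' z' \<le> quad_diff f w x y z"
proof -
  have nonneg: "0 \<le> quad_diff f u v s t" if "u \<in> A" "v \<in> A" "s \<in> B" "t \<in> B" "u \<le> v" "s \<le> t"
    for u v s t
    using f that unfolding increasing_differences_on_def by blast
  have "y \<le> z"
    using \<open>y \<le> y'\<close> \<open>y' \<le> z'\<close> \<open>z' \<le> z\<close> by order
  have "quad_diff f w x y z =
      (quad_diff f w w' y z + quad_diff f x' x y z + quad_diff f w' x' y y' + quad_diff f w' x' z' z)
      + quad_diff f w' x' y' z'"
    by (simp add: quad_diff_def algebra_simps)
  moreover have "0 \<le> quad_diff f w w' y z + quad_diff f x' x y z + quad_diff f w' x' y y' + quad_diff f w' x' z' z"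
    using A B assms(6-8,13-15) \<open>y \<le> z\<close> by (intro add_nonneg_nonneg nonneg) auto
  ultimately show ?thesis
    by simp
qed

lemma quad_diff_eq_0_subrectangle:
  assumes f: "increasing_differences_on A B f" and "quad_diff f w x y z = 0"
    and "w \<in> A" "w' \<in> A" "x' \<in> A" "x \<in> A" "w \<le> w'" "w' \<le> x'" "x' \<le> x"
    and "y \<in> B" "y' \<in> B" "z' \<in> B" "z \<in> B" "y \<le> y'" "y' \<le> z'" "z' \<le> z"
  shows "quad_diff f w' x' y' z' = 0"
proof (rule order.antisym)
  show "quad_diff f w' x' y' z' \<le> 0"
    using quad_diff_mono[OF f] assms by metis
  show "0 \<le> quad_diff f w' x' y' z'"
    using f assms unfolding increasing_differences_on_def by blast
qed

section \<open>Mixed second differences on the grid\<close>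

definition box_diff :: "(grade \<Rightarrow> 'b::ab_group_add) \<Rightarrow> grade \<Rightarrow> 'b" where
  "box_diff u c = u c - u (fst c - 1, snd c) - u (fst c, snd c - 1) + u (fst c - 1, snd c - 1)"

lemma box_diff_cong:
  assumes "\<And>x. x \<in> {(fst c - 1, snd c - 1)..c} \<Longrightarrow> u x = v x"
  shows "box_diff u c = box_diff v c"
  using assms by (cases c) (simp add: box_diff_def less_eq_prod_def)

lemma box_diff_sum: "box_diff (\<lambda>x. \<Sum>i\<in>I. u i x) c = (\<Sum>i\<in>I. box_diff (u i) c)"
  by (simp add: box_diff_def sum_subtractf sum.distrib)

lemma box_diff_of_bool_le:
  assumes "(1, 1) \<le> c"
  shows "box_diff (\<lambda>x. of_bool (s \<le> x)) c = (of_bool (s = c) :: 'b::ring_1)"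
  using assms by (cases s; cases c) (auto simp: box_diff_def less_eq_prod_def)

lemma box_diff_box_diff_eq_quad_diffs:
  "box_diff (\<lambda>x. box_diff (f x) h) d =
     quad_diff f (fst d - 1, snd d) d (fst h - 1, snd h) h
   - quad_diff f (fst d - 1, snd d) d (fst h - 1, snd h - 1) (fst h, snd h - 1)
   - quad_diff f (fst d - 1, snd d - 1) (fst d, snd d - 1) (fst h - 1, snd h) h
   + quad_diff f (fst d - 1, snd d - 1) (fst d, snd d - 1) (fst h - 1, snd h - 1) (fst h, snd h - 1)"
  by (simp add: box_diff_def quad_diff_def algebra_simps)

lemma box_diff_box_diff_eq_0:
  fixes f :: "grade \<Rightarrow> grade \<Rightarrow> 'c::ordered_ab_group_add"
  assumes f: "increasing_differences_on A B f"
    and A: "{(fst d - 1, snd d - 1)..d} \<subseteq> A" and B: "{(fst h - 1, snd h - 1)..h} \<subseteq> B"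
    and 0: "quad_diff f (fst d - 1, snd d - 1) d (fst h - 1, snd h - 1) h = 0"
  shows "box_diff (\<lambda>x. box_diff (f x) h) d = 0"
proof -
  have sub: "quad_diff f w x y z = 0"
    if "w \<in> {(fst d - 1, snd d - 1)..d}" "x \<in> {(fst d - 1, snd d - 1)..d}" "w \<le> x"
      and "y \<in> {(fst h - 1, snd h - 1)..h}" "z \<in> {(fst h - 1, snd h - 1)..h}" "y \<le> z" for w x y z
  proof (rule quad_diff_eq_0_subrectangle[OF f 0])
    have "(fst d - 1, snd d - 1) \<in> {(fst d - 1, snd d - 1)..d}" "d \<in> {(fst d - 1, snd d - 1)..d}"
      and "(fst h - 1, snd h - 1) \<in> {(fst h - 1, snd h - 1)..h}" "h \<in> {(fst h - 1, snd h - 1)..h}"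
      by (auto simp: less_eq_prod_def)
    then show "(fst d - 1, snd d - 1) \<in> A" "w \<in> A" "x \<in> A" "d \<in> A"
      and "(fst h - 1, snd h - 1) \<in> B" "y \<in> B" "z \<in> B" "h \<in> B"
      using that A B by blast+
  qed (use that in auto)
  obtain d1 d2 h1 h2 where "d = (d1, d2)" "h = (h1, h2)"
    by fastforce
  then show ?thesis
    unfolding box_diff_box_diff_eq_quad_diffs by (simp add: sub less_eq_prod_def)
qed

lemma box_diff_downward_sum:
  fixes g :: "grade \<times> grade \<Rightarrow> 'b::comm_ring_1"
  assumes "finite S" "(d, h) \<in> S" "(1, 1) \<le> d" "(1, 1) \<le> h"
    and f: "\<And>x y. x \<in> {(fst d - 1, snd d - 1)..d} \<Longrightarrow> y \<in> {(fst h - 1, snd h - 1)..h} \<Longrightarrow>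
      f x y = (\<Sum>r\<in>{r\<in>S. r \<le> (x, y)}. g r)"
  shows "box_diff (\<lambda>x. box_diff (f x) h) d = g (d, h)"
proof -
  have "f x y = (\<Sum>r\<in>S. g r * of_bool (fst r \<le> x) * of_bool (snd r \<le> y))"
    if "x \<in> {(fst d - 1, snd d - 1)..d}" "y \<in> {(fst h - 1, snd h - 1)..h}" for x y
    unfolding f[OF that] less_eq_prod_def[of _ "(x, y)"] sum.inter_filter[OF \<open>finite S\<close>]
    by (intro sum.cong) auto
  then have "box_diff (\<lambda>x. box_diff (f x) h) d =
      box_diff (\<lambda>x. box_diff (\<lambda>y. \<Sum>r\<in>S. g r * of_bool (fst r \<le> x) * of_bool (snd r \<le> y)) h) d"
    by (intro box_diff_cong) simp
  also have "\<dots> = (\<Sum>r\<in>S. g r * box_diff (\<lambda>x. of_bool (fst r \<le> x)) d * box_diff (\<lambda>y. of_bool (snd r \<le> y)) h)"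
    by (simp add: box_diff_sum) (simp add: box_diff_def algebra_simps)
  also have "\<dots> = (\<Sum>r\<in>S. g r * of_bool (r = (d, h)))"
    using assms(3,4) by (intro sum.cong) (auto simp: box_diff_of_bool_le)
  also have "\<dots> = g (d, h)"
    using assms(1,2) by simp
  finally show ?thesis .
qed

section \<open>Moebius inversion\<close>

lemma moebius_inversion_exists:
  fixes f :: "'a::order \<Rightarrow> 'b::ab_group_add"
  assumes "finite P"
  shows "\<exists>g. \<forall>p\<in>P. f p = (\<Sum>r\<in>{r\<in>P. r \<le> p}. g r)"
  using assms
proof (induction P rule: finite_remove_induct)
  case empty
  show ?case by simp
next
  case (remove P)
  obtain m where m: "m \<in> P" and maximal: "\<And>p. p \<in> P \<Longrightarrow> m \<le> p \<Longrightarrow> p = m"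
    using finite_has_maximal[OF remove.hyps(1,2)] by metis
  obtain g where g: "\<And>p. p \<in> P - {m} \<Longrightarrow> f p = (\<Sum>r\<in>{r\<in>P - {m}. r \<le> p}. g r)"
    using remove.IH[OF m] by blast
  define g' where "g' = g(m := f m - (\<Sum>r\<in>{r\<in>P - {m}. r \<le> m}. g r))"
  have fin: "finite {r\<in>P - {m}. r \<le> p}" for p
    using remove.hyps(1) by simp
  have "f p = (\<Sum>r\<in>{r\<in>P. r \<le> p}. g' r)" if "p \<in> P" for p
  proof (cases "p = m")
    case True
    have "{r\<in>P. r \<le> m} = insert m {r\<in>P - {m}. r \<le> m}"
      using m by auto
    then show ?thesis
      using True fin by (simp add: g'_def)
  next
    case False
    have "{r\<in>P. r \<le> p} = {r\<in>P - {m}. r \<le> p}"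
      using maximal that False by (auto dest: order.trans)
    then show ?thesis
      using False that g by (simp add: g'_def)
  qed
  then show ?case by blast
qed

lemma moebius_inversion_unique:
  fixes g g' :: "'a::order \<Rightarrow> 'b::ab_group_add"
  assumes "finite P"
    and sums: "\<And>p. p \<in> P \<Longrightarrow> (\<Sum>r\<in>{r\<in>P. r \<le> p}. g r) = (\<Sum>r\<in>{r\<in>P. r \<le> p}. g' r)"
    and "p \<in> P"
  shows "g p = g' p"
proof (rule ccontr)
  assume "g p \<noteq> g' p"
  then obtain m where m: "m \<in> P" "g m \<noteq> g' m"
    and minimal: "\<And>r. r \<in> P \<Longrightarrow> g r \<noteq> g' r \<Longrightarrow> r \<le> m \<Longrightarrow> r = m"
    using finite_has_minimal[of "{r\<in>P. g r \<noteq> g' r}"] \<open>finite P\<close> \<open>p \<in> P\<close> by force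
  have below: "{r\<in>P. r \<le> m} = insert m {r\<in>P. r < m}"
    using m by auto
  have fin: "finite {r\<in>P. r < m}"
    using \<open>finite P\<close> by simp
  have "(\<Sum>r\<in>{r\<in>P. r < m}. g r) = (\<Sum>r\<in>{r\<in>P. r < m}. g' r)"
  proof (rule sum.cong[OF refl])
    fix r assume "r \<in> {r\<in>P. r < m}"
    then show "g r = g' r"
      using minimal[of r] by (auto simp: less_le)
  qed
  then show False
    using sums[OF m(1)] m(2) fin unfolding below by simp
qed

definition is_moebius_inverse :: "'a::order set \<Rightarrow> ('a \<Rightarrow> 'b::ab_group_add) \<Rightarrow> ('a \<Rightarrow> 'b) \<Rightarrow> bool" where
  "is_moebius_inverse P f g \<longleftrightarrow>
     (\<forall>r. r \<notin> P \<longrightarrow> g r = 0) \<and> (\<forall>p\<in>P. f p = (\<Sum>r\<in>{r\<in>P. r \<le> p}. g r))"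

lemma ex1_moebius_inverse:
  assumes "finite P"
  shows "\<exists>!g. is_moebius_inverse P f g"
proof -
  obtain g where g: "\<forall>p\<in>P. f p = (\<Sum>r\<in>{r\<in>P. r \<le> p}. g r)"
    using moebius_inversion_exists[OF assms, where f = f] by blast
  have "is_moebius_inverse P f (\<lambda>r. if r \<in> P then g r else 0)"
    using g by (simp add: is_moebius_inverse_def)
  moreover have "g1 = g2" if g1: "is_moebius_inverse P f g1" and g2: "is_moebius_inverse P f g2"
    for g1 g2
  proof
    fix s
    have "(\<Sum>r\<in>{r\<in>P. r \<le> p}. g1 r) = (\<Sum>r\<in>{r\<in>P. r \<le> p}. g2 r)" if "p \<in> P" for p
      using that g1 g2 unfolding is_moebius_inverse_def by metis
    then show "g1 s = g2 s"
      using moebius_inversion_unique[OF assms] g1 g2 unfolding is_moebius_inverse_def by metis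
  qed
  ultimately show ?thesis
    by blast
qed

lemma finite_intervals: "finite (intervals n)"
proof (rule finite_subset)
  show "intervals n \<subseteq> grid n \<times> grid n"
    by (auto simp: intervals_def)
  show "finite (grid n \<times> grid n)"
    by (simp add: grid_def)
qed

lemma Dgm_is_moebius_inverse:
  "is_moebius_inverse (intervals n) (\<lambda>(x, y). int (ZB k K F n q x y)) (case_prod (Dgm k K F n q))"
proof -
  let ?ZB = "\<lambda>(x, y). int (ZB k K F n q x y)"
  have "Dgm k K F n q = (THE D. is_moebius_inverse (intervals n) ?ZB (case_prod D))"
  proof -
    have "{(x, y) \<in> intervals n. x \<le> z \<and> y \<le> w} = {r\<in>intervals n. r \<le> (z, w)}" for z w
      by auto
    then show ?thesis
      unfolding Dgm_def is_moebius_inverse_def by (simp add: case_prod_beta')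
  qed
  moreover have "\<exists>!D. is_moebius_inverse (intervals n) ?ZB (case_prod D)"
    using ex1_moebius_inverse[OF finite_intervals, where f = ?ZB] by (metis case_prod_curry curry_case_prod)
  ultimately show ?thesis
    using theI' by metis
qed

lemma Dgm_eq_box_diff:
  assumes "d \<in> grid n" "h \<in> grid n" "(1, 1) \<le> d" "d \<le> (fst h - 1, snd h - 1)"
  shows "Dgm k K F n q d h = box_diff (\<lambda>x. box_diff (\<lambda>y. int (ZB k K F n q x y)) h) d"
proof -
  have mem_grid: "x \<in> grid n" if "x \<le> c" "c \<in> grid n" for x c
    using that by (cases x) (auto simp: grid_def less_eq_prod_def)
  have box: "(x, y) \<in> intervals n"
    if "x \<in> {(fst d - 1, snd d - 1)..d}" "y \<in> {(fst h - 1, snd h - 1)..h}" for x y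
  proof -
    have "x \<le> d" "y \<le> h" "d \<le> y"
      using that assms(4) by auto
    then show ?thesis
      using assms(1,2) mem_grid unfolding intervals_def by (blast intro: order.trans)
  qed
  have "(1, 1) \<le> h"
    using assms(3,4) by (auto simp: less_eq_prod_def)
  have "box_diff (\<lambda>x. box_diff (\<lambda>y. int (ZB k K F n q x y)) h) d = case_prod (Dgm k K F n q) (d, h)"
  proof (rule box_diff_downward_sum[where S = "intervals n"])
    show "(d, h) \<in> intervals n"
      using box[of d h] by (simp add: less_eq_prod_def)
    show "int (ZB k K F n q x y) = (\<Sum>r\<in>{r\<in>intervals n. r \<le> (x, y)}. case_prod (Dgm k K F n q) r)"
      if "x \<in> {(fst d - 1, snd d - 1)..d}" "y \<in> {(fst h - 1, snd h - 1)..h}" for x y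
      using Dgm_is_moebius_inverse box[OF that] unfolding is_moebius_inverse_def by fastforce
  qed (use finite_intervals assms(3) \<open>(1, 1) \<le> h\<close> in auto)
  then show ?thesis
    by simp
qed

section \<open>Dimension counting\<close>

interpretation pointwise: vector_space "\<lambda>(a::'k::field) (f::'a \<Rightarrow> 'k) x. a * f x"
  by unfold_locales (simp_all add: fun_eq_iff algebra_simps)

context vector_space
begin

lemma independent_card_le_dim_finite:
  assumes "finite G" "W \<subseteq> span G" and "independent A" "A \<subseteq> W"
  shows "finite A" "card A \<le> dim W"
proof -
  obtain D where D: "D \<subseteq> W" "independent D" "W \<subseteq> span D" "card D = dim W"
    using basis_exists by blast
  have "finite D"
    using independent_span_bound[OF \<open>finite G\<close> D(2)] D(1) \<open>W \<subseteq> span G\<close> by blast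
  moreover have "A \<subseteq> span D"
    using assms(4) D(3) by blast
  ultimately show "finite A" "card A \<le> dim W"
    using independent_span_bound[OF _ assms(3)] D(4) by metis+
qed

lemma dim_add_dim_le_dim_add_dim_Int:
  assumes "finite G" and "subspace X" "subspace Y" and "X \<subseteq> W" "Y \<subseteq> W" "W \<subseteq> span G"
  shows "dim X + dim Y \<le> dim W + dim (X \<inter> Y)"
proof -
  note bound = independent_card_le_dim_finite[OF \<open>finite G\<close> \<open>W \<subseteq> span G\<close>]
  obtain B where B: "B \<subseteq> X \<inter> Y" "independent B" "X \<inter> Y \<subseteq> span B" "card B = dim (X \<inter> Y)"
    using basis_exists by blast
  obtain C where C: "C \<subseteq> X" "independent C" "X \<subseteq> span C" "card C = dim X"
    using basis_exists by blast
  obtain E where E: "C \<subseteq> E" "E \<subseteq> C \<union> Y" "independent E" "C \<union> Y \<subseteq> span E"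
    using maximal_independent_subset_extend[of C "C \<union> Y"] C(2) by blast
  have "E \<subseteq> W"
    using E(2) C(1) assms(4,5) by blast
  then have "finite E" "card E \<le> dim W"
    using bound E(3) by blast+
  have "finite B"
    using bound[OF B(2)] B(1) assms(4) by blast
  \<comment> \<open>Splitting y \<in> Y along E = C \<union> (E - C) leaves a component in span C \<inter> Y \<subseteq> X \<inter> Y.\<close>
  have "Y \<subseteq> span (B \<union> (E - C))"
  proof
    fix y assume "y \<in> Y"
    then have "y \<in> span (C \<union> (E - C))"
      using E(1,4) by (simp add: Un_absorb1 subset_iff)
    then obtain x v where x: "x \<in> span C" and v: "v \<in> span (E - C)" and y: "y = x + v"
      unfolding span_Un by blast
    have "v \<in> Y"
      using v E(2) span_minimal[of "E - C" Y] \<open>subspace Y\<close> by blast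
    moreover have "x \<in> X"
      using x span_minimal[OF C(1) \<open>subspace X\<close>] by blast
    ultimately have "x \<in> span B"
      using y \<open>y \<in> Y\<close> \<open>subspace Y\<close> B(3) subspace_diff[of Y y v] by auto
    then show "y \<in> span (B \<union> (E - C))"
      using y v span_add span_mono[of B "B \<union> (E - C)"] span_mono[of "E - C" "B \<union> (E - C)"] by blast
  qed
  then have "dim Y \<le> card (B \<union> (E - C))"
    using \<open>finite B\<close> \<open>finite E\<close> by (intro dim_le_card) auto
  also have "\<dots> \<le> card B + (card E - card C)"
    using card_Un_le[of B "E - C"] card_Diff_subset[OF finite_subset[OF E(1) \<open>finite E\<close>] E(1)] by simp
  finally show ?thesis
    using B(4) C(4) \<open>card E \<le> dim W\<close> card_mono[OF \<open>finite E\<close> E(1)] by linarith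
qed

lemma dim_Int_increasing_differences:
  assumes "finite G" and "subspace Z" "subspace Z'" "subspace B" "subspace B'"
    and "Z \<subseteq> Z'" "B \<subseteq> B'" "Z' \<subseteq> span G"
  shows "dim (Z' \<inter> B) + dim (Z \<inter> B') \<le> dim (Z' \<inter> B') + dim (Z \<inter> B)"
proof -
  have "(Z' \<inter> B) \<inter> (Z \<inter> B') = Z \<inter> B"
    using assms(6,7) by blast
  moreover have "dim (Z' \<inter> B) + dim (Z \<inter> B') \<le> dim (Z' \<inter> B') + dim ((Z' \<inter> B) \<inter> (Z \<inter> B'))"
  proof (rule dim_add_dim_le_dim_add_dim_Int[OF \<open>finite G\<close>])
    show "subspace (Z' \<inter> B)" "subspace (Z \<inter> B')"
      using assms(2-5) by (simp_all add: subspace_inter)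
    show "Z' \<inter> B \<subseteq> Z' \<inter> B'" "Z \<inter> B' \<subseteq> Z' \<inter> B'" "Z' \<inter> B' \<subseteq> span G"
      using assms(6-8) by blast+
  qed
  ultimately show ?thesis
    by simp
qed

end

section \<open>Cycles and boundaries\<close>

lemma sum_apply: "(\<Sum>i\<in>I. f i) x = (\<Sum>i\<in>I. f i x)"
  by (induction I rule: infinite_finite_induct) auto

lemma finitely_supported_in_span:
  fixes c :: "'a \<Rightarrow> 'k::field"
  assumes "finite K" and "\<And>s. c s \<noteq> 0 \<Longrightarrow> s \<in> K"
  shows "c \<in> pointwise.span ((\<lambda>s t. of_bool (t = s)) ` K)"
proof -
  have "c = (\<Sum>s\<in>K. (\<lambda>t. c s * of_bool (t = s)))"
  proof
    fix t
    have "(\<Sum>s\<in>K. (\<lambda>t. c s * of_bool (t = s))) t = (\<Sum>s\<in>K. if s = t then c s else 0)"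
      unfolding sum_apply by (intro sum.cong) auto
    also have "\<dots> = c t"
      using assms by auto
    finally show "c t = (\<Sum>s\<in>K. (\<lambda>t. c s * of_bool (t = s))) t" ..
  qed
  also have "\<dots> \<in> pointwise.span ((\<lambda>s t. of_bool (t = s)) ` K)"
    by (intro pointwise.span_sum pointwise.span_scale pointwise.span_base) auto
  finally show ?thesis .
qed

lemma boundary_eq_sum:
  "boundary K c \<tau> = (\<Sum>\<sigma>\<in>K. (if \<tau> = {} then 0 else
     \<Sum>v\<in>\<sigma>. if \<sigma> - {v} = \<tau> then (-1) ^ card {u\<in>\<sigma>. u < v} else 0) * c \<sigma>)"
  by (simp add: boundary_def sum_distrib_right if_distrib if_distribR cong: if_cong)

lemma linear_boundary: "Vector_Spaces.linear (\<lambda>(a::'k::field) f x. a * f x) (\<lambda>a f x. a * f x) (boundary K)"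
  by (auto simp: linear_iff pointwise.vector_space_axioms boundary_eq_sum fun_eq_iff
      sum.distrib sum_distrib_left algebra_simps)

lemma chains_subspace: "pointwise.subspace (chains q S)"
  by (auto simp: pointwise.subspace_def chains_def) (metis add.left_neutral)+

lemma cycles_subspace: "pointwise.subspace (cycles K q S)"
proof -
  have "cycles K q S = chains q S \<inter> {c. boundary K c = 0}"
    by (auto simp: cycles_def)
  also have "pointwise.subspace \<dots>"
    by (rule pointwise.subspace_inter[OF chains_subspace
          module_hom.subspace_kernel[OF linear_boundary[unfolded linear_iff_module_hom]]])
  finally show ?thesis .
qed

lemma boundaries_subspace: "pointwise.subspace (boundaries K q S)"
  unfolding boundaries_def
  by (rule module_hom.subspace_image[OF linear_boundary[unfolded linear_iff_module_hom] chains_subspace])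

lemma chains_mono: "S \<subseteq> S' \<Longrightarrow> chains q S \<subseteq> chains q S'"
  by (auto simp: chains_def)

lemma cycles_mono: "S \<subseteq> S' \<Longrightarrow> cycles K q S \<subseteq> cycles K q S'"
  using chains_mono[of S S' q] by (auto simp: cycles_def)

lemma boundaries_mono: "S \<subseteq> S' \<Longrightarrow> boundaries K q S \<subseteq> boundaries K q S'"
  unfolding boundaries_def by (intro image_mono chains_mono)

lemma cycles_in_span:
  assumes "finite K" and "S \<subseteq> K"
  shows "(cycles K q S :: ('a::linorder set \<Rightarrow> 'k::field) set) \<subseteq> pointwise.span ((\<lambda>s t. of_bool (t = s)) ` K)"
proof
  fix c :: "'a set \<Rightarrow> 'k" assume "c \<in> cycles K q S"
  then have "c s \<noteq> 0 \<Longrightarrow> s \<in> K" for s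
    using assms(2) by (auto simp: cycles_def chains_def)
  then show "c \<in> pointwise.span ((\<lambda>s t. of_bool (t = s)) ` K)"
    using finitely_supported_in_span[OF assms(1)] by blast
qed

lemma two_filtration_subset: "two_filtration n K F \<Longrightarrow> x \<in> grid n \<Longrightarrow> F x \<subseteq> K"
  unfolding two_filtration_def subcomplex_def by blast

lemma two_filtration_mono:
  "two_filtration n K F \<Longrightarrow> x \<in> grid n \<Longrightarrow> x' \<in> grid n \<Longrightarrow> x \<le> x' \<Longrightarrow> F x \<subseteq> F x'"
  unfolding two_filtration_def by blast

text \<open>The convention ZB[x, (n, n)] = dim Z(x) amounts to reading B at the top grade as all chains.\<close>

definition extended_boundaries :: "nat \<Rightarrow> ('v::linorder) set set \<Rightarrow> (grade \<Rightarrow> 'v set set) \<Rightarrow> nat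
    \<Rightarrow> grade \<Rightarrow> ('v set \<Rightarrow> 'k::field) set" where
  "extended_boundaries n K F q y = (if y = (n, n) then UNIV else boundaries K q (F y))"

lemma ZB_eq_dim_Int:
  "ZB TYPE('k::field) K F n q x y =
     pointwise.dim (cycles K q (F x) \<inter> (extended_boundaries n K F q y :: ('v::linorder set \<Rightarrow> 'k) set))"
  by (simp add: ZB_def fdim_def extended_boundaries_def)

lemma extended_boundaries_subspace: "pointwise.subspace (extended_boundaries n K F q y)"
  by (simp add: extended_boundaries_def boundaries_subspace)

lemma extended_boundaries_mono:
  assumes "two_filtration n K F" and "y \<in> grid n" "y' \<in> grid n" "y \<le> y'"
  shows "extended_boundaries n K F q y \<subseteq> extended_boundaries n K F q y'"
proof (cases "y' = (n, n)")
  case False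
  then have "y \<noteq> (n, n)"
    using assms(2-4) by (auto simp: grid_def less_eq_prod_def)
  then show ?thesis
    using False boundaries_mono[OF two_filtration_mono[OF assms]]
    by (simp add: extended_boundaries_def)
qed (simp add: extended_boundaries_def)

lemma ZB_increasing_differences:
  fixes K :: "('v::linorder) set set"
  assumes "finite K" and F: "two_filtration n K F"
  shows "increasing_differences_on (grid n) (grid n) (\<lambda>x y. int (ZB TYPE('k::field) K F n q x y))"
  unfolding increasing_differences_on_def quad_diff_def ZB_eq_dim_Int
proof (intro ballI impI)
  fix w x y z assume grid: "w \<in> grid n" "x \<in> grid n" "y \<in> grid n" "z \<in> grid n"
    and "w \<le> x" "y \<le> z"
  let ?Z = "\<lambda>x. cycles K q (F x) :: ('v set \<Rightarrow> 'k) set"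
  let ?B = "\<lambda>y. extended_boundaries n K F q y :: ('v set \<Rightarrow> 'k) set"
  have "pointwise.dim (?Z x \<inter> ?B y) + pointwise.dim (?Z w \<inter> ?B z)
      \<le> pointwise.dim (?Z x \<inter> ?B z) + pointwise.dim (?Z w \<inter> ?B y)"
    by (rule pointwise.dim_Int_increasing_differences[OF finite_imageI[OF assms(1)]
          cycles_subspace cycles_subspace extended_boundaries_subspace extended_boundaries_subspace
          cycles_mono[OF two_filtration_mono[OF F grid(1,2) \<open>w \<le> x\<close>]]
          extended_boundaries_mono[OF F grid(3,4) \<open>y \<le> z\<close>]
          cycles_in_span[OF assms(1) two_filtration_subset[OF F grid(2)]]])
  then show "0 \<le> int (pointwise.dim (?Z x \<inter> ?B z)) - int (pointwise.dim (?Z x \<inter> ?B y))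
      - int (pointwise.dim (?Z w \<inter> ?B z)) + int (pointwise.dim (?Z w \<inter> ?B y))"
    by linarith
qed

theorem mainTheorem3:
  fixes K :: "('v::linorder) set set" and F :: "grade \<Rightarrow> 'v set set"
    and n q :: nat and d h :: grade
  assumes "simplicial_complex K"
    and "two_filtration n K F"
    and "non_degenerate n K F"
    and "d \<in> grid n" and "h \<in> grid n"
    and "(1, 1) \<le> d" and "d \<le> (fst h - 1, snd h - 1)"
    and "quad TYPE('k::field) K F n q (fst d - 1, snd d - 1) d (fst h - 1, snd h - 1) h = 0"
  shows "Dgm TYPE('k) K F n q d h = 0"
proof -
  have "finite K"
    using assms(1) unfolding simplicial_complex_def by blast
  have box_in_grid: "{(fst c - 1, snd c - 1)..c} \<subseteq> grid n" if "c \<in> grid n" for c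
    using that by (auto simp: grid_def less_eq_prod_def)
  have "Dgm TYPE('k) K F n q d h = box_diff (\<lambda>x. box_diff (\<lambda>y. int (ZB TYPE('k) K F n q x y)) h) d"
    using assms(4-7) by (rule Dgm_eq_box_diff)
  also have "\<dots> = 0"
    using box_diff_box_diff_eq_0[OF ZB_increasing_differences[OF \<open>finite K\<close> assms(2)]
        box_in_grid[OF assms(4)] box_in_grid[OF assms(5)]] assms(8)
    by (simp add: quad_eq_quad_diff)
  finally show ?thesis .
qed

end
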